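(* Let $\{F_b\}$ be a finite POVM on $\mathbb{C}^d$. Among all instruments compatible with $\{F_b\}$, i.e. families of operators $\{A_{bi}\}$ with $\sum_i A_{bi}^\dagger A_{bi}=F_b$ for every $b$, the average disturbance on the uniform ensemble, $$1-\int d\Omega_\psi\sum_{b,i}|\langle\psi|A_{bi}|\psi\rangle|^2,$$ attains its minimum at an instrument with one-term conditional dynamics (a single operator $A_b$ for each $b$); namely the choice $A_b=F_b^{1/2}$ is minimally disturbing.
   Context: A POVM $\{F_b\}$ is a finite family of positive semidefinite operators on $\mathbb{C}^d$ with $\sum_b F_b=I$. $d\Omega_\psi$ denotes the unitarily invariant probability measure on unit vectors (pure states) of $\mathbb{C}^d$. *)

theory Defs
  imports "HOL-Analysis.Analysis"
begin

definition cinner_vec :: "complex^'d \<Rightarrow> complex^'d \<Rightarrow> complex" where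
  "cinner_vec x y = (\<Sum>i\<in>UNIV. cnj (x $ i) * y $ i)"

definition adj :: "complex^'d^'d \<Rightarrow> complex^'d^'d" where
  "adj A = (\<chi> i j. cnj (A $ j $ i))"

text \<open>Positive semidefinite: \<open>\<langle>x|A x\<rangle>\<close> is a nonnegative real for every \<open>x\<close>
  (over \<open>\<complex>\<close> this implies hermiticity).\<close>
definition psd :: "complex^'d^'d \<Rightarrow> bool" where
  "psd A \<longleftrightarrow> (\<forall>x. Im (cinner_vec x (A *v x)) = 0 \<and> 0 \<le> Re (cinner_vec x (A *v x)))"

definition is_POVM :: "'b set \<Rightarrow> ('b \<Rightarrow> complex^'d^'d) \<Rightarrow> bool" where
  "is_POVM B F \<longleftrightarrow> finite B \<and> (\<forall>b\<in>B. psd (F b)) \<and> (\<Sum>b\<in>B. F b) = mat 1"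

definition psd_sqrt :: "complex^'d^'d \<Rightarrow> complex^'d^'d" where
  "psd_sqrt F = (THE S. psd S \<and> S ** S = F)"

definition compatible_instrument ::
  "'b set \<Rightarrow> ('b \<Rightarrow> complex^'d^'d) \<Rightarrow> ('b \<Rightarrow> 'i set) \<Rightarrow> ('b \<Rightarrow> 'i \<Rightarrow> complex^'d^'d) \<Rightarrow> bool" where
  "compatible_instrument B F I A \<longleftrightarrow>
     (\<forall>b\<in>B. finite (I b) \<and> (\<Sum>i\<in>I b. adj (A b i) ** A b i) = F b)"

text \<open>Average over the unitarily invariant probability measure on unit vectors of \<open>\<complex>^d\<close>,
  realised as the normalised cone (surface) measure: for a function \<open>f\<close> on the sphere,
  \<open>\<integral> f d\<Omega> = (1/vol B) \<integral>\<^sub>B f(x/|x|) dx\<close> with \<open>B\<close> the unit ball of \<open>\<complex>^d \<cong> \<real>^(2d)\<close>.\<close>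
definition sphere_avg :: "(complex^'d \<Rightarrow> real) \<Rightarrow> real" where
  "sphere_avg f =
     (\<integral>x\<in>ball 0 1. f (x /\<^sub>R norm x) \<partial>lebesgue) / measure lebesgue (ball (0::complex^'d) 1)"

definition avg_disturbance ::
  "'b set \<Rightarrow> ('b \<Rightarrow> 'i set) \<Rightarrow> ('b \<Rightarrow> 'i \<Rightarrow> complex^'d^'d) \<Rightarrow> real" where
  "avg_disturbance B I A =
     1 - sphere_avg (\<lambda>\<psi>. \<Sum>b\<in>B. \<Sum>i\<in>I b. (cmod (cinner_vec \<psi> (A b i *v \<psi>)))\<^sup>2)"

end

theory Submission
  imports Defs
begin

text \<open>Unitary invariance of \<open>d\<Omega>\<close> gives \<open>\<integral> |\<langle>\<psi>|A \<psi>\<rangle>|\<^sup>2 d\<Omega> = c (|tr A|\<^sup>2 + tr A\<^sup>\<dagger>A)\<close>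
  with \<open>c \<ge> 0\<close>: coordinate phase rotations kill the quartic monomials whose indices do not pair
  up, and coordinate permutations together with one Hadamard rotation relate the remaining
  fourth moments. Summed over a compatible instrument the second term contributes
  \<open>\<Sum>\<^sub>b tr F\<^sub>b\<close>, independently of the instrument. For the first term, expanding each trace in
  an eigenbasis of \<open>F\<^sub>b\<close> and applying Minkowski's and the Cauchy-Schwarz inequality gives
  \<open>\<Sum>\<^sub>i |tr A\<^sub>b\<^sub>i|\<^sup>2 \<le> (tr \<surd>F\<^sub>b)\<^sup>2\<close>, with equality for \<open>A\<^sub>b = \<surd>F\<^sub>b\<close>.\<close>

section \<open>Invariance of Lebesgue measure under orthogonal transformations\<close>

lemma inner_basis_relabel_Basis:
  fixes \<sigma> :: "'a::euclidean_space \<Rightarrow> 'b::euclidean_space"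
  assumes \<sigma>: "bij_betw \<sigma> Basis Basis" and c: "c \<in> Basis"
  shows "(\<Sum>b\<in>Basis. (x \<bullet> b) *\<^sub>R \<sigma> b) \<bullet> \<sigma> c = x \<bullet> c"
proof -
  have \<sigma>_Basis: "b \<in> Basis \<Longrightarrow> \<sigma> b \<in> Basis" for b
    using \<sigma> by (auto simp: bij_betw_def)
  have \<sigma>_inj: "b \<in> Basis \<Longrightarrow> \<sigma> b = \<sigma> c \<Longrightarrow> b = c" for b
    using \<sigma> c by (auto simp: bij_betw_def inj_on_def)
  have "(\<Sum>b\<in>Basis. (x \<bullet> b) *\<^sub>R \<sigma> b) \<bullet> \<sigma> c = (\<Sum>b\<in>Basis. if b = c then x \<bullet> b else 0)"
    unfolding inner_sum_left by (rule sum.cong) (use c \<sigma>_Basis \<sigma>_inj in \<open>auto simp: inner_Basis\<close>)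
  then show ?thesis using c by simp
qed

lemma inner_basis_relabel:
  fixes \<sigma> :: "'a::euclidean_space \<Rightarrow> 'b::euclidean_space"
  assumes \<sigma>: "bij_betw \<sigma> Basis Basis"
  shows "(\<Sum>b\<in>Basis. (x \<bullet> b) *\<^sub>R \<sigma> b) \<bullet> (\<Sum>b\<in>Basis. (y \<bullet> b) *\<^sub>R \<sigma> b) = x \<bullet> y"
proof -
  let ?P = "\<lambda>x. (\<Sum>b\<in>Basis. (x \<bullet> b) *\<^sub>R \<sigma> b)"
  have "?P x \<bullet> ?P y = (\<Sum>c\<in>Basis. (?P x \<bullet> c) * (?P y \<bullet> c))"
    by (rule euclidean_inner)
  also have "\<dots> = (\<Sum>b\<in>Basis. (?P x \<bullet> \<sigma> b) * (?P y \<bullet> \<sigma> b))"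
    using sum.reindex_bij_betw[OF \<sigma>, of "\<lambda>c. (?P x \<bullet> c) * (?P y \<bullet> c)"] by simp
  also have "\<dots> = (\<Sum>b\<in>Basis. (x \<bullet> b) * (y \<bullet> b))"
    by (intro sum.cong refl) (simp add: inner_basis_relabel_Basis[OF \<sigma>])
  finally show ?thesis by (simp only: euclidean_inner[symmetric])
qed

lemma basis_relabel_inv_into:
  fixes \<sigma> :: "'a::euclidean_space \<Rightarrow> 'b::euclidean_space"
  assumes \<sigma>: "bij_betw \<sigma> Basis Basis"
  shows "(\<Sum>b\<in>Basis. ((\<Sum>c\<in>Basis. (x \<bullet> c) *\<^sub>R \<sigma> c) \<bullet> b) *\<^sub>R inv_into Basis \<sigma> b) = x"
    (is "(\<Sum>b\<in>Basis. (?\<Phi> \<bullet> b) *\<^sub>R inv_into Basis \<sigma> b) = x")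
proof -
  have "(\<Sum>b\<in>Basis. (?\<Phi> \<bullet> b) *\<^sub>R inv_into Basis \<sigma> b)
      = (\<Sum>b\<in>Basis. (?\<Phi> \<bullet> \<sigma> b) *\<^sub>R inv_into Basis \<sigma> (\<sigma> b))"
    using sum.reindex_bij_betw[OF \<sigma>, of "\<lambda>c. (?\<Phi> \<bullet> c) *\<^sub>R inv_into Basis \<sigma> c"] by simp
  also have "\<dots> = (\<Sum>b\<in>Basis. (x \<bullet> b) *\<^sub>R b)"
    by (intro sum.cong refl) (simp add: inner_basis_relabel_Basis[OF \<sigma>] bij_betw_inv_into_left[OF \<sigma>])
  finally show ?thesis by (simp add: euclidean_representation)
qed

lemma linear_basis_relabel: "linear (\<lambda>x. \<Sum>b\<in>Basis. (x \<bullet> b) *\<^sub>R (\<sigma> b :: 'b::real_vector))"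
  by (auto simp: linear_iff inner_add_left scaleR_add_left sum.distrib scaleR_sum_right)

lemma linear_borel_measurable:
  fixes f :: "'a::euclidean_space \<Rightarrow> 'b::euclidean_space"
  shows "linear f \<Longrightarrow> f \<in> borel_measurable borel"
  by (intro borel_measurable_continuous_onI linear_continuous_on linear_conv_bounded_linear[THEN iffD1])

lemma distr_lborel_basis_relabel:
  fixes \<sigma> :: "'a::euclidean_space \<Rightarrow> 'b::euclidean_space"
  assumes \<sigma>: "bij_betw \<sigma> Basis Basis"
  shows "distr lborel borel (\<lambda>x. \<Sum>b\<in>Basis. (x \<bullet> b) *\<^sub>R \<sigma> b) = lborel"
    (is "distr lborel borel ?\<Phi> = lborel")
proof (rule lborel_eqI[symmetric])
  define \<Psi> where "\<Psi> y = (\<Sum>b\<in>Basis. (y \<bullet> \<sigma> b) *\<^sub>R b)" for y :: 'b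
  have \<sigma>_Basis: "b \<in> Basis \<Longrightarrow> \<sigma> b \<in> Basis" for b using \<sigma> by (auto simp: bij_betw_def)
  have ball_Basis_relabel: "(\<forall>b\<in>Basis. P b) \<longleftrightarrow> (\<forall>b\<in>Basis. P (\<sigma> b))" for P
    using bij_betw_imp_surj_on[OF \<sigma>] by (metis (no_types, lifting) imageE imageI)
  have \<Psi>_inner: "\<Psi> y \<bullet> c = y \<bullet> \<sigma> c" if "c \<in> Basis" for y c
    using that by (simp add: \<Psi>_def inner_sum_left inner_Basis if_distrib cong: if_cong)
  have meas: "?\<Phi> \<in> borel_measurable borel"
    by (rule linear_borel_measurable[OF linear_basis_relabel])
  fix l u :: 'b assume le: "\<And>b. b \<in> Basis \<Longrightarrow> l \<bullet> b \<le> u \<bullet> b"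
  have "x \<in> ?\<Phi> -` box l u \<longleftrightarrow> (\<forall>b\<in>Basis. l \<bullet> \<sigma> b < x \<bullet> b \<and> x \<bullet> b < u \<bullet> \<sigma> b)" for x
  proof -
    have "x \<in> ?\<Phi> -` box l u \<longleftrightarrow> (\<forall>b'\<in>Basis. l \<bullet> b' < ?\<Phi> x \<bullet> b' \<and> ?\<Phi> x \<bullet> b' < u \<bullet> b')"
      by (simp add: mem_box)
    also have "\<dots> \<longleftrightarrow> (\<forall>b\<in>Basis. l \<bullet> \<sigma> b < ?\<Phi> x \<bullet> \<sigma> b \<and> ?\<Phi> x \<bullet> \<sigma> b < u \<bullet> \<sigma> b)"
      by (rule ball_Basis_relabel)
    finally show ?thesis by (simp add: inner_basis_relabel_Basis[OF \<sigma>])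
  qed
  then have "?\<Phi> -` box l u = box (\<Psi> l) (\<Psi> u)"
    by (auto simp: mem_box \<Psi>_inner)
  then have "emeasure (distr lborel borel ?\<Phi>) (box l u) = emeasure lborel (box (\<Psi> l) (\<Psi> u))"
    using meas by (simp add: emeasure_distr)
  also have "\<dots> = (\<Prod>b\<in>Basis. (\<Psi> u - \<Psi> l) \<bullet> b)"
    using le \<sigma>_Basis by (intro emeasure_lborel_box) (auto simp: \<Psi>_inner)
  also have "\<dots> = (\<Prod>b\<in>Basis. (u - l) \<bullet> \<sigma> b)"
    by (intro arg_cong[where f=ennreal] prod.cong refl) (simp add: inner_diff_left \<Psi>_inner)
  also have "\<dots> = (\<Prod>b\<in>Basis. (u - l) \<bullet> b)"
    using prod.reindex_bij_betw[OF \<sigma>, of "\<lambda>b. (u - l) \<bullet> b"] by simp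
  finally show "emeasure (distr lborel borel ?\<Phi>) (box l u) = (\<Prod>b\<in>Basis. (u - l) \<bullet> b)" .
qed simp

lemma distr_lborel_orthogonal_transformation_cart:
  fixes T :: "real^'n::{finite,wellorder} \<Rightarrow> real^'n::_"
  assumes T: "orthogonal_transformation T"
  shows "distr lborel borel T = lborel"
proof (rule lborel_eqI[symmetric])
  have meas: "T \<in> borel_measurable borel"
    using T orthogonal_transformation_linear linear_borel_measurable by blast
  have T_inv: "orthogonal_transformation (inv T)" and "bij T"
    using T orthogonal_transformation_inv orthogonal_transformation_bij by blast+
  fix l u :: "real^'n::{finite,wellorder}" assume le: "\<And>b. b \<in> Basis \<Longrightarrow> l \<bullet> b \<le> u \<bullet> b"
  have pre: "T -` box l u = inv T ` box l u"
    using \<open>bij T\<close> by (simp add: bij_vimage_eq_inv_image)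
  have "T -` box l u \<in> sets borel"
    using meas by (simp add: measurable_sets_borel)
  then have "emeasure (distr lborel borel T) (box l u) = emeasure lebesgue (inv T ` box l u)"
    using meas pre by (simp add: emeasure_distr emeasure_completion)
  also have "\<dots> = measure lebesgue (box l u)"
    using measurable_orthogonal_image[OF T_inv] measure_orthogonal_image[OF T_inv]
    by (simp add: emeasure_eq_measure2)
  also have "\<dots> = emeasure lborel (box l u)"
    by (simp add: emeasure_eq_measure2)
  also have "\<dots> = (\<Prod>b\<in>Basis. (u - l) \<bullet> b)"
    using le by (intro emeasure_lborel_box) auto
  finally show "emeasure (distr lborel borel T) (box l u) = (\<Prod>b\<in>Basis. (u - l) \<bullet> b)" .
qed simp

text \<open>\<open>measure_orthogonal_image\<close> only covers \<open>real^'n\<close> with well-ordered \<open>'n\<close>; the general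
  case is transported along the isometry that relabels the standard bases.\<close>

lemma distr_lborel_orthogonal_transformation:
  fixes T :: "'a::euclidean_space \<Rightarrow> 'a"
  assumes T: "orthogonal_transformation T"
    and dim: "CARD('n::{finite,wellorder}) = DIM('a)"
  shows "distr lborel borel T = lborel"
proof -
  obtain \<sigma> :: "'a \<Rightarrow> real^'n::{finite,wellorder}" where \<sigma>: "bij_betw \<sigma> Basis Basis"
  proof -
    have "card (Basis :: 'a set) = card (Basis :: (real^'n::{finite,wellorder}) set)" using dim by simp
    then show ?thesis using that by (metis finite_Basis finite_same_card_bij)
  qed
  define \<tau> where "\<tau> = inv_into Basis \<sigma>"
  have \<tau>: "bij_betw \<tau> Basis Basis" unfolding \<tau>_def by (rule bij_betw_inv_into[OF \<sigma>])
  define \<Phi> where "\<Phi> x = (\<Sum>b\<in>Basis. (x \<bullet> b) *\<^sub>R \<sigma> b)" for x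
  define \<Psi> where "\<Psi> y = (\<Sum>b\<in>Basis. (y \<bullet> b) *\<^sub>R \<tau> b)" for y
  have \<Psi>_\<Phi>: "\<Psi> (\<Phi> x) = x" for x
    unfolding \<Phi>_def \<Psi>_def \<tau>_def by (rule basis_relabel_inv_into[OF \<sigma>])
  define R where "R = \<Phi> \<circ> T \<circ> \<Psi>"
  have "orthogonal_transformation R"
    unfolding orthogonal_transformation_def
  proof (intro conjI allI)
    show "linear R"
      unfolding R_def \<Phi>_def[abs_def] \<Psi>_def[abs_def] using T
      by (intro linear_compose linear_basis_relabel) (simp add: orthogonal_transformation_linear)
    show "R v \<bullet> R w = v \<bullet> w" for v w
      using T by (simp add: R_def \<Phi>_def \<Psi>_def inner_basis_relabel[OF \<sigma>] inner_basis_relabel[OF \<tau>]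
          orthogonal_transformation_def)
  qed
  then have R: "distr lborel borel R = lborel" and "R \<in> borel_measurable borel"
    by (simp_all add: distr_lborel_orthogonal_transformation_cart linear_borel_measurable
        orthogonal_transformation_linear)
  moreover have "T = \<Psi> \<circ> R \<circ> \<Phi>" by (rule ext) (simp add: R_def \<Psi>_\<Phi>)
  moreover have "\<Phi> \<in> borel_measurable borel" "\<Psi> \<in> borel_measurable borel"
    unfolding \<Phi>_def[abs_def] \<Psi>_def[abs_def] by (simp_all add: linear_borel_measurable linear_basis_relabel)
  ultimately have "distr lborel borel T = distr (distr (distr lborel borel \<Phi>) borel R) borel \<Psi>"
    by (simp add: distr_distr comp_assoc)
  then show ?thesis
    using R distr_lborel_basis_relabel[OF \<sigma>] distr_lborel_basis_relabel[OF \<tau>]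
    by (simp add: \<Phi>_def[abs_def] \<Psi>_def[abs_def])
qed

text \<open>\<open>'d bit0\<close> has \<open>2 * CARD('d)\<close> elements, the real dimension of \<open>\<complex>^d\<close>.\<close>

corollary distr_lborel_orthogonal_transformation_cvec:
  fixes T :: "complex^'d \<Rightarrow> complex^'d"
  assumes "orthogonal_transformation T"
  shows "distr lborel borel T = lborel"
  by (rule distr_lborel_orthogonal_transformation[OF assms, where 'n="'d bit0"]) simp

section \<open>Integrals over the unit sphere of \<open>\<complex>^d\<close>\<close>

definition sphere_integral :: "('a::euclidean_space \<Rightarrow> 'c::{banach,second_countable_topology}) \<Rightarrow> 'c" where
  "sphere_integral h = (LINT x|lebesgue. indicator (ball (0::'a) 1) x *\<^sub>R h (x /\<^sub>R norm x))"

lemma sphere_avg_eq_sphere_integral: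
  fixes f :: "complex^'d \<Rightarrow> real"
  shows "sphere_avg f = sphere_integral f / measure lebesgue (ball (0::complex^'d) 1)"
  unfolding sphere_avg_def sphere_integral_def set_lebesgue_integral_def ..

lemma sphere_integral_orthogonal_transformation:
  fixes T :: "complex^'d \<Rightarrow> complex^'d"
    and h :: "complex^'d \<Rightarrow> 'c::{banach,second_countable_topology}"
  assumes T: "orthogonal_transformation T" and h: "h \<in> borel_measurable borel"
  shows "sphere_integral (\<lambda>\<psi>. h (T \<psi>)) = sphere_integral h"
proof -
  let ?g = "\<lambda>x. indicator (ball (0::complex^'d) 1) x *\<^sub>R h (x /\<^sub>R norm x)"
  have T_meas: "T \<in> borel_measurable borel"
    using T orthogonal_transformation_linear linear_borel_measurable by blast
  have "(\<lambda>x::complex^'d. x /\<^sub>R norm x) \<in> borel_measurable borel"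
    by measurable
  then have g_meas: "?g \<in> borel_measurable borel"
    by (intro borel_measurable_scaleR borel_measurable_indicator measurable_compose[OF _ h]) simp_all
  have "?g (T x) = indicator (ball 0 1) x *\<^sub>R h (T (x /\<^sub>R norm x))" for x
    using T by (simp add: orthogonal_transformation_norm orthogonal_transformation_scaleR indicator_def)
  then have "sphere_integral (\<lambda>\<psi>. h (T \<psi>)) = integral\<^sup>L lborel (\<lambda>x. ?g (T x))"
    using measurable_compose[OF T_meas g_meas] by (simp add: sphere_integral_def integral_completion)
  also have "\<dots> = integral\<^sup>L (distr lborel borel T) ?g"
    using T_meas g_meas by (simp add: integral_distr)
  also have "\<dots> = sphere_integral h"
    using g_meas by (simp add: distr_lborel_orthogonal_transformation_cvec[OF T]
        sphere_integral_def integral_completion)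
  finally show ?thesis .
qed

lemma integrable_sphere_integrand:
  fixes h :: "'a::euclidean_space \<Rightarrow> 'c::{banach,second_countable_topology}"
  assumes h: "continuous_on UNIV h"
  shows "integrable lebesgue (\<lambda>x. indicator (ball (0::'a) 1) x *\<^sub>R h (x /\<^sub>R norm x))"
proof -
  have "compact (h ` cball 0 1)"
    by (intro compact_continuous_image continuous_on_subset[OF h]) auto
  then obtain B where B: "\<And>y. y \<in> cball 0 1 \<Longrightarrow> norm (h y) \<le> B"
    by (meson bounded_iff compact_imp_bounded imageI)
  show ?thesis
  proof (rule integrableI_bounded_set_indicator[where B=B])
    show "(\<lambda>x. h (x /\<^sub>R norm x)) \<in> borel_measurable lebesgue"
      using borel_measurable_continuous_onI[OF h] by (simp add: measurable_completion)
    have "x /\<^sub>R norm x \<in> cball 0 1" for x :: 'a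
      by (cases "x = 0") auto
    then show "AE x in lebesgue. x \<in> ball 0 1 \<longrightarrow> norm (h (x /\<^sub>R norm x)) \<le> B"
      using B by simp
  qed (use emeasure_bounded_finite in auto)
qed

lemma sphere_integral_sum:
  fixes h :: "'s \<Rightarrow> 'a::euclidean_space \<Rightarrow> 'c::{banach,second_countable_topology}"
  assumes "finite S" "\<And>s. s \<in> S \<Longrightarrow> continuous_on UNIV (h s)"
  shows "sphere_integral (\<lambda>\<psi>. \<Sum>s\<in>S. h s \<psi>) = (\<Sum>s\<in>S. sphere_integral (h s))"
  unfolding sphere_integral_def scaleR_sum_right
  by (rule Bochner_Integration.integral_sum) (use integrable_sphere_integrand assms(2) in auto)

lemma sphere_integral_mult_left:
  fixes h :: "'a::euclidean_space \<Rightarrow> 'c::{real_normed_field,banach,second_countable_topology}"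
  shows "sphere_integral (\<lambda>\<psi>. c * h \<psi>) = c * sphere_integral h"
proof -
  have "indicator (ball 0 1) x *\<^sub>R (c * h (x /\<^sub>R norm x))
      = c * (indicator (ball 0 1) x *\<^sub>R h (x /\<^sub>R norm x))" for x :: 'a
    by (rule mult_scaleR_right[symmetric])
  then show ?thesis
    unfolding sphere_integral_def by (simp only: integral_mult_right_zero)
qed

lemma sphere_integral_of_real:
  fixes f :: "'a::euclidean_space \<Rightarrow> real"
  shows "sphere_integral (\<lambda>\<psi>. complex_of_real (f \<psi>)) = complex_of_real (sphere_integral f)"
proof -
  have "indicator (ball 0 1) x *\<^sub>R complex_of_real (f (x /\<^sub>R norm x))
      = complex_of_real (indicator (ball 0 1) x *\<^sub>R f (x /\<^sub>R norm x))" for x :: 'a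
    by (simp add: scaleR_conv_of_real)
  then show ?thesis
    unfolding sphere_integral_def by (simp only: integral_complex_of_real)
qed

lemma sphere_integral_nonneg:
  fixes f :: "'a::euclidean_space \<Rightarrow> real"
  assumes "\<And>\<psi>. 0 \<le> f \<psi>"
  shows "0 \<le> sphere_integral f"
  unfolding sphere_integral_def using assms by (intro Bochner_Integration.integral_nonneg) simp

lemma orthogonal_transformation_cvecI:
  fixes T :: "complex^'d \<Rightarrow> complex^'d"
  assumes "linear T" and "\<And>\<psi>. (\<Sum>i\<in>UNIV. (cmod (T \<psi> $ i))\<^sup>2) = (\<Sum>i\<in>UNIV. (cmod (\<psi> $ i))\<^sup>2)"
  shows "orthogonal_transformation T"
  unfolding orthogonal_transformation using assms by (simp add: norm_vec_def L2_set_def)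

definition scale_coord :: "'d \<Rightarrow> complex \<Rightarrow> complex^'d \<Rightarrow> complex^'d" where
  "scale_coord p z \<psi> = (\<chi> j. if j = p then z * \<psi> $ j else \<psi> $ j)"

definition permute_coords :: "('d \<Rightarrow> 'd) \<Rightarrow> complex^'d \<Rightarrow> complex^'d" where
  "permute_coords \<pi> \<psi> = (\<chi> j. \<psi> $ \<pi> j)"

definition hadamard_coords :: "'d \<Rightarrow> 'd \<Rightarrow> complex^'d \<Rightarrow> complex^'d" where
  "hadamard_coords p q \<psi> = (\<chi> j. if j = p then (\<psi> $ p + \<psi> $ q) / sqrt 2
     else if j = q then (\<psi> $ p - \<psi> $ q) / sqrt 2 else \<psi> $ j)"

lemma orthogonal_transformation_scale_coord:
  assumes "cmod z = 1"
  shows "orthogonal_transformation (scale_coord p z)"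
proof (rule orthogonal_transformation_cvecI)
  show "linear (scale_coord p z)"
    by (auto simp: linear_iff scale_coord_def vec_eq_iff algebra_simps scaleR_conv_of_real)
  show "(\<Sum>i\<in>UNIV. (cmod (scale_coord p z \<psi> $ i))\<^sup>2) = (\<Sum>i\<in>UNIV. (cmod (\<psi> $ i))\<^sup>2)" for \<psi>
    using assms by (intro sum.cong refl) (simp add: scale_coord_def norm_mult)
qed

lemma orthogonal_transformation_permute_coords:
  assumes "bij \<pi>"
  shows "orthogonal_transformation (permute_coords \<pi>)"
proof (rule orthogonal_transformation_cvecI)
  show "linear (permute_coords \<pi>)"
    by (auto simp: linear_iff permute_coords_def vec_eq_iff)
  show "(\<Sum>i\<in>UNIV. (cmod (permute_coords \<pi> \<psi> $ i))\<^sup>2) = (\<Sum>i\<in>UNIV. (cmod (\<psi> $ i))\<^sup>2)" for \<psi>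
    using sum.reindex_bij_betw[of \<pi> UNIV UNIV "\<lambda>i. (cmod (\<psi> $ i))\<^sup>2"] assms
    by (simp add: permute_coords_def bij_betw_def)
qed

lemma orthogonal_transformation_hadamard_coords:
  fixes p q :: "'d::finite"
  assumes pq: "p \<noteq> q"
  shows "orthogonal_transformation (hadamard_coords p q)"
proof (rule orthogonal_transformation_cvecI)
  show "linear (hadamard_coords p q)"
    by (auto simp: linear_iff hadamard_coords_def vec_eq_iff)
      (simp_all add: scaleR_conv_of_real algebra_simps add_divide_distrib diff_divide_distrib)
  fix \<psi> :: "complex^'d"
  have split: "(\<Sum>i\<in>UNIV. f i) = f p + f q + (\<Sum>i\<in>UNIV - {p, q}. f i)" for f :: "'d \<Rightarrow> real"
    using pq sum.subset_diff[of "{p, q}" UNIV f] by (simp add: add.commute)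
  have halves: "(cmod ((a + b) / sqrt 2))\<^sup>2 + (cmod ((a - b) / sqrt 2))\<^sup>2 = (cmod a)\<^sup>2 + (cmod b)\<^sup>2"
    for a b :: complex
    unfolding norm_divide power_divide cmod_power2 by (simp add: power2_eq_square field_simps)
  let ?H = "hadamard_coords p q \<psi>"
  have "(\<Sum>i\<in>UNIV. (cmod (?H $ i))\<^sup>2)
      = (cmod (?H $ p))\<^sup>2 + (cmod (?H $ q))\<^sup>2 + (\<Sum>i\<in>UNIV - {p, q}. (cmod (?H $ i))\<^sup>2)"
    by (rule split)
  also have "\<dots> = (cmod (\<psi> $ p))\<^sup>2 + (cmod (\<psi> $ q))\<^sup>2 + (\<Sum>i\<in>UNIV - {p, q}. (cmod (\<psi> $ i))\<^sup>2)"
    using pq halves[of "\<psi> $ p" "\<psi> $ q"] by (simp add: hadamard_coords_def)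
  also have "\<dots> = (\<Sum>i\<in>UNIV. (cmod (\<psi> $ i))\<^sup>2)"
    by (rule split[symmetric])
  finally show "(\<Sum>i\<in>UNIV. (cmod (?H $ i))\<^sup>2) = (\<Sum>i\<in>UNIV. (cmod (\<psi> $ i))\<^sup>2)" .
qed

lemma continuous_on_vec_nth: "continuous_on UNIV (\<lambda>\<psi>::'a::real_normed_vector^'d. \<psi> $ j)"
  by (intro linear_continuous_on bounded_linear_vec_nth bounded_linear_ident)

lemma cinner_vec_matrix_vector_mult:
  "cinner_vec \<psi> (A *v \<phi>) = (\<Sum>j\<in>UNIV. \<Sum>k\<in>UNIV. cnj (\<psi> $ j) * A $ j $ k * \<phi> $ k)"
  by (simp add: cinner_vec_def matrix_vector_mult_def sum_distrib_left mult.assoc)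

lemma cinner_add_right: "cinner_vec x (y + z) = cinner_vec x y + cinner_vec x z"
  by (simp add: cinner_vec_def distrib_left sum.distrib)

lemma cinner_add_left: "cinner_vec (x + y) z = cinner_vec x z + cinner_vec y z"
  by (simp add: cinner_vec_def distrib_right sum.distrib)

lemma cinner_diff_right: "cinner_vec x (y - z) = cinner_vec x y - cinner_vec x z"
  by (simp add: cinner_vec_def right_diff_distrib sum_subtractf)

lemma cinner_smult_right: "cinner_vec x (c *s y) = c * cinner_vec x y"
  by (simp add: cinner_vec_def sum_distrib_left mult_ac)

lemma cinner_smult_left: "cinner_vec (c *s x) y = cnj c * cinner_vec x y"
  by (simp add: cinner_vec_def sum_distrib_left mult_ac)

lemma cinner_sum_right: "cinner_vec x (\<Sum>u\<in>S. f u) = (\<Sum>u\<in>S. cinner_vec x (f u))"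
  unfolding cinner_vec_def by (simp add: sum_distrib_left) (rule sum.swap)

lemma cinner_commute: "cinner_vec y x = cnj (cinner_vec x y)"
  by (simp add: cinner_vec_def cnj_sum mult.commute)

lemma cinner_adj: "cinner_vec x (A *v y) = cinner_vec (adj A *v x) y"
proof -
  have "cinner_vec (adj A *v x) y = (\<Sum>j\<in>UNIV. \<Sum>i\<in>UNIV. cnj (x $ i) * A $ i $ j * y $ j)"
    by (simp add: cinner_vec_def matrix_vector_mult_def adj_def cnj_sum sum_distrib_left
        sum_distrib_right mult_ac)
  also have "\<dots> = (\<Sum>i\<in>UNIV. \<Sum>j\<in>UNIV. cnj (x $ i) * A $ i $ j * y $ j)"
    by (rule sum.swap)
  finally show ?thesis
    unfolding cinner_vec_matrix_vector_mult by (rule sym)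
qed

lemma cinner_self: "cinner_vec x x = of_real (\<Sum>i\<in>UNIV. (cmod (x $ i))\<^sup>2)"
  unfolding cinner_vec_def of_real_sum complex_norm_square by (rule sum.cong) (simp_all add: mult.commute)

lemma cinner_self_eq_norm_sq: "cinner_vec x x = of_real ((norm x)\<^sup>2)"
  by (simp add: cinner_self norm_vec_def L2_set_def sum_nonneg)

lemma cinner_zero_left [simp]: "cinner_vec 0 x = 0"
  by (simp add: cinner_vec_def)

lemma cinner_zero_right [simp]: "cinner_vec x 0 = 0"
  by (simp add: cinner_vec_def)

lemma Re_cinner_self: "Re (cinner_vec x x) = (norm x)\<^sup>2"
  by (simp add: cinner_self_eq_norm_sq)

lemma cinner_self_eq_0_iff: "cinner_vec x x = 0 \<longleftrightarrow> x = 0"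
  by (simp add: cinner_self_eq_norm_sq)

lemma inner_eq_Re_cinner: "x \<bullet> y = Re (cinner_vec x y)"
  by (simp add: inner_vec_def cinner_vec_def inner_complex_def Re_sum)

lemma cinner_axis_left: "cinner_vec (axis j 1) y = y $ j"
proof -
  have "cinner_vec (axis j 1) y = (\<Sum>i\<in>UNIV. if i = j then y $ j else 0)"
    unfolding cinner_vec_def by (rule sum.cong) (auto simp: axis_def)
  then show ?thesis by simp
qed

lemma matrix_vector_mult_axis: "(A *v axis k 1) $ j = A $ j $ k"
proof -
  have "(A *v axis k 1) $ j = (\<Sum>i\<in>UNIV. if i = k then A $ j $ k else 0)"
    unfolding matrix_vector_mult_def vec_lambda_beta by (rule sum.cong) (auto simp: axis_def)
  then show ?thesis by simp
qed

lemma cinner_axis_matrix: "cinner_vec (axis j 1) (A *v axis k 1) = A $ j $ k"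
  by (simp add: cinner_axis_left matrix_vector_mult_axis)

lemma matrix_vector_mult_sum_right: "A *v (\<Sum>u\<in>S. f u) = (\<Sum>u\<in>S. A *v (f u :: 'a::comm_ring_1^'n))"
  by (induction S rule: infinite_finite_induct) (auto simp: matrix_vector_right_distrib)

lemma matrix_vector_mult_sum_left: "(\<Sum>i\<in>I. M i) *v x = (\<Sum>i\<in>I. M i *v (x :: 'a::comm_ring_1^'n))"
  by (induction I rule: infinite_finite_induct) (auto simp: matrix_vector_mult_add_rdistrib)

lemma adj_adj [simp]: "adj (adj A) = A"
  by (simp add: adj_def vec_eq_iff)

lemma cinner_quadratic_expand:
  "cinner_vec (a + c *s b) (A *v (a + c *s b)) = cinner_vec a (A *v a) + c * cinner_vec a (A *v b)
     + cnj c * cinner_vec b (A *v a) + cnj c * c * cinner_vec b (A *v b)"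
  unfolding matrix_vector_right_distrib vector_scalar_commute cinner_add_left cinner_add_right
    cinner_smult_left cinner_smult_right by (simp add: algebra_simps)

lemma psd_adj_eq:
  assumes "psd A"
  shows "adj A = A"
proof -
  have im: "Im (cinner_vec x (A *v x)) = 0" for x using assms psd_def by blast
  have diag: "Im (A $ j $ j) = 0" for j using im[of "axis j 1"] by (simp add: cinner_axis_matrix)
  have herm: "A $ k $ j = cnj (A $ j $ k)" for j k
  proof -
    have real: "cinner_vec (axis j 1 + 1 *s axis k 1) (A *v (axis j 1 + 1 *s axis k 1))
        = A $ j $ j + A $ j $ k + A $ k $ j + A $ k $ k"
      unfolding cinner_quadratic_expand cinner_axis_matrix by simp
    have imag: "cinner_vec (axis j 1 + \<i> *s axis k 1) (A *v (axis j 1 + \<i> *s axis k 1))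
        = A $ j $ j + \<i> * A $ j $ k - \<i> * A $ k $ j + A $ k $ k"
      unfolding cinner_quadratic_expand cinner_axis_matrix by simp
    have "Im (A $ j $ k + A $ k $ j) = 0"
      using im[of "axis j 1 + 1 *s axis k 1"] diag[of j] diag[of k] unfolding real by simp
    moreover have "Re (A $ j $ k - A $ k $ j) = 0"
      using im[of "axis j 1 + \<i> *s axis k 1"] diag[of j] diag[of k] unfolding imag by simp
    ultimately show ?thesis by (simp add: complex_eq_iff)
  qed
  show ?thesis
    unfolding adj_def vec_eq_iff
  proof (intro allI)
    show "(\<chi> i j. cnj (A $ j $ i)) $ j $ k = A $ j $ k" for j k
      using herm[of k j] by simp
  qed
qed

section \<open>Fourth moments\<close>

definition quartic_monomial :: "'d \<Rightarrow> 'd \<Rightarrow> 'd \<Rightarrow> 'd \<Rightarrow> complex^'d \<Rightarrow> complex" where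
  "quartic_monomial j k l m \<psi> = cnj (\<psi> $ j) * \<psi> $ k * \<psi> $ l * cnj (\<psi> $ m)"

definition coord_moment :: "'d::finite \<Rightarrow> 'd \<Rightarrow> real" where
  "coord_moment a b = sphere_integral (\<lambda>\<psi>::complex^'d. (cmod (\<psi> $ a))\<^sup>2 * (cmod (\<psi> $ b))\<^sup>2)"

lemma continuous_on_quartic_monomial: "continuous_on UNIV (quartic_monomial j k l m)"
  unfolding quartic_monomial_def by (intro continuous_intros continuous_on_vec_nth)

text \<open>Multiplying the coordinate \<open>p\<close> by \<open>\<i>\<close> is unitary and multiplies the monomial by a
  factor \<open>\<noteq> 1\<close> for a suitable \<open>p\<close>, unless its conjugated and unconjugated indices pair up.\<close>

lemma sphere_integral_quartic_monomial_eq_0: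
  fixes j k l m :: "'d::finite"
  assumes unpaired: "\<not> ((k = j \<and> l = m) \<or> (k = m \<and> l = j))"
  shows "sphere_integral (quartic_monomial j k l m) = 0"
proof -
  define g where "g p x = (if x = p then \<i> else 1)" for p x :: 'd
  define factor where "factor p = cnj (g p j) * g p k * g p l * cnj (g p m)" for p
  have scale: "quartic_monomial j k l m (scale_coord p \<i> \<psi>) = factor p * quartic_monomial j k l m \<psi>"
    for p \<psi>
    by (simp add: quartic_monomial_def scale_coord_def factor_def g_def algebra_simps)
  obtain p where p: "factor p \<noteq> 1"
  proof (cases "k = j")
    case True
    then have "factor m \<noteq> 1" using unpaired by (auto simp: factor_def g_def complex_eq_iff)
    then show ?thesis using that by blast
  next
    case kj: False
    show ?thesis
    proof (cases "l = j")
      case True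
      then have "factor m \<noteq> 1" using unpaired by (auto simp: factor_def g_def complex_eq_iff)
      then show ?thesis using that by blast
    next
      case False
      then have "factor j \<noteq> 1" using kj by (auto simp: factor_def g_def complex_eq_iff)
      then show ?thesis using that by blast
    qed
  qed
  have "sphere_integral (quartic_monomial j k l m)
      = sphere_integral (\<lambda>\<psi>. quartic_monomial j k l m (scale_coord p \<i> \<psi>))"
    by (rule sphere_integral_orthogonal_transformation[symmetric]) (simp_all add:
        orthogonal_transformation_scale_coord borel_measurable_continuous_onI
        continuous_on_quartic_monomial)
  also have "\<dots> = factor p * sphere_integral (quartic_monomial j k l m)"
    unfolding scale by (rule sphere_integral_mult_left)
  finally have "(1 - factor p) * sphere_integral (quartic_monomial j k l m) = 0"
    by (simp add: algebra_simps)
  with p show ?thesis by simp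
qed

lemma quartic_monomial_paired:
  "quartic_monomial j j l l = (\<lambda>\<psi>. complex_of_real ((cmod (\<psi> $ j))\<^sup>2 * (cmod (\<psi> $ l))\<^sup>2))"
  "quartic_monomial j k j k = (\<lambda>\<psi>. complex_of_real ((cmod (\<psi> $ j))\<^sup>2 * (cmod (\<psi> $ k))\<^sup>2))"
  unfolding quartic_monomial_def of_real_mult complex_norm_square fun_eq_iff
  by (simp_all only: mult_ac simp_thms)

lemma sphere_integral_quartic_monomial_cases:
  fixes j k l m :: "'d::finite"
  shows "sphere_integral (quartic_monomial j k l m) =
    (if k = j \<and> l = m then coord_moment j l else if k = m \<and> l = j then coord_moment j k else 0)"
proof -
  consider "k = j" "l = m" | "k = m" "l = j" "k \<noteq> j" | "\<not> ((k = j \<and> l = m) \<or> (k = m \<and> l = j))"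
    by blast
  then show ?thesis
  proof cases
    case 1
    then have "sphere_integral (quartic_monomial j k l m) = coord_moment j l"
      by (simp only: quartic_monomial_paired coord_moment_def sphere_integral_of_real)
    with 1 show ?thesis by simp
  next
    case 2
    have "sphere_integral (quartic_monomial j k l m) = coord_moment j k"
      using 2(1,2) by (simp only: quartic_monomial_paired coord_moment_def sphere_integral_of_real)
    with 2 show ?thesis by simp
  next
    case 3
    then have "\<not> (k = j \<and> l = m)" "\<not> (k = m \<and> l = j)" by blast+
    with sphere_integral_quartic_monomial_eq_0[OF 3] show ?thesis by (simp only: if_False of_real_0)
  qed
qed

lemma coord_moment_commute: "coord_moment a b = coord_moment b a"
  unfolding coord_moment_def by (simp only: mult.commute)

lemma coord_moment_permute_coords:
  fixes \<pi> :: "'d::finite \<Rightarrow> 'd"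
  assumes "bij \<pi>"
  shows "coord_moment (\<pi> a) (\<pi> b) = coord_moment a b"
proof -
  have "coord_moment (\<pi> a) (\<pi> b)
      = sphere_integral (\<lambda>\<psi>. (\<lambda>\<phi>::complex^'d. (cmod (\<phi> $ a))\<^sup>2 * (cmod (\<phi> $ b))\<^sup>2) (permute_coords \<pi> \<psi>))"
    by (simp add: coord_moment_def permute_coords_def)
  also have "\<dots> = coord_moment a b"
    unfolding coord_moment_def using assms
    by (intro sphere_integral_orthogonal_transformation orthogonal_transformation_permute_coords
        borel_measurable_continuous_onI continuous_intros continuous_on_vec_nth)
  finally show ?thesis .
qed

lemma coord_moment_diag:
  fixes a b :: "'d::finite"
  shows "coord_moment a a = coord_moment b b"
  using coord_moment_permute_coords[of "Transposition.transpose a b" a a] by simp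

lemma sphere_integral_quartic_form:
  fixes c :: "'d::finite \<Rightarrow> 'd \<Rightarrow> 'd \<Rightarrow> 'd \<Rightarrow> complex"
  assumes "finite J" "finite K" "finite L" "finite M"
  shows "sphere_integral (\<lambda>\<psi>. \<Sum>j\<in>J. \<Sum>k\<in>K. \<Sum>l\<in>L. \<Sum>m\<in>M. c j k l m * quartic_monomial j k l m \<psi>)
       = (\<Sum>j\<in>J. \<Sum>k\<in>K. \<Sum>l\<in>L. \<Sum>m\<in>M. c j k l m * sphere_integral (quartic_monomial j k l m))"
proof -
  have cont: "continuous_on UNIV (\<lambda>\<psi>. c j k l m * quartic_monomial j k l m \<psi>)" for j k l m
    by (intro continuous_intros continuous_on_quartic_monomial)
  show ?thesis
    using assms
    by (simp add: sphere_integral_sum cont continuous_on_sum sphere_integral_mult_left)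
qed

text \<open>Invariance under the Hadamard rotation in the \<open>(a, b)\<close>-plane turns \<open>|\<psi>\<^sub>a|\<^sup>4\<close> into a quartic
  form in \<open>\<psi>\<^sub>a, \<psi>\<^sub>b\<close> whose integral is \<open>(2 M a a + 4 M a b) / 4\<close>, where \<open>M = coord_moment\<close>.\<close>

lemma coord_moment_diag_eq_double:
  fixes a b :: "'d::finite"
  assumes ab: "a \<noteq> b"
  shows "coord_moment a a = 2 * coord_moment a b"
proof -
  define F where "F \<phi> = complex_of_real ((cmod (\<phi> $ a))\<^sup>2 * (cmod (\<phi> $ a))\<^sup>2)" for \<phi> :: "complex^'d"
  have expand: "F (hadamard_coords a b \<psi>)
      = (\<Sum>j\<in>{a,b}. \<Sum>k\<in>{a,b}. \<Sum>l\<in>{a,b}. \<Sum>m\<in>{a,b}. 1/4 * quartic_monomial j k l m \<psi>)" for \<psi>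
  proof -
    define w where "w = (\<psi> $ a + \<psi> $ b) / sqrt 2"
    have "F (hadamard_coords a b \<psi>) = (w * cnj w) * (w * cnj w)"
      unfolding F_def of_real_mult complex_norm_square w_def by (simp add: hadamard_coords_def)
    also have "w * cnj w = (\<psi> $ a + \<psi> $ b) * (cnj (\<psi> $ a) + cnj (\<psi> $ b)) / 2"
    proof -
      have "complex_of_real (sqrt 2) * complex_of_real (sqrt 2) = 2"
        by (simp only: of_real_mult[symmetric]) simp
      then show ?thesis unfolding w_def by (simp add: mult_ac)
    qed
    also have "(\<psi> $ a + \<psi> $ b) * (cnj (\<psi> $ a) + cnj (\<psi> $ b)) / 2 * ((\<psi> $ a + \<psi> $ b) * (cnj (\<psi> $ a) + cnj (\<psi> $ b)) / 2)
      = (\<Sum>j\<in>{a,b}. \<Sum>k\<in>{a,b}. \<Sum>l\<in>{a,b}. \<Sum>m\<in>{a,b}. 1/4 * quartic_monomial j k l m \<psi>)"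
      using ab by (simp add: quartic_monomial_def distrib_left distrib_right add_ac mult_ac)
    finally show ?thesis .
  qed
  have "complex_of_real (coord_moment a a) = sphere_integral F"
    by (simp only: F_def[abs_def] coord_moment_def sphere_integral_of_real)
  also have "\<dots> = sphere_integral (\<lambda>\<psi>. F (hadamard_coords a b \<psi>))"
    unfolding F_def[abs_def]
    by (intro sphere_integral_orthogonal_transformation[symmetric] orthogonal_transformation_hadamard_coords[OF ab]
        borel_measurable_continuous_onI continuous_intros continuous_on_vec_nth)
  also have "\<dots> = (\<Sum>j\<in>{a,b}. \<Sum>k\<in>{a,b}. \<Sum>l\<in>{a,b}. \<Sum>m\<in>{a,b}. 1/4 * sphere_integral (quartic_monomial j k l m))"
    unfolding expand by (rule sphere_integral_quartic_form) simp_all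
  also have "\<dots> = complex_of_real (coord_moment a a / 2 + coord_moment a b)"
    using ab coord_moment_diag[of b a] coord_moment_commute[of b a]
    by (simp add: sphere_integral_quartic_monomial_cases)
  finally show ?thesis by (simp only: of_real_eq_iff)
qed

lemma coord_moment_eq:
  fixes a j l :: "'d::finite"
  shows "coord_moment j l = coord_moment a a / 2 * (if j = l then 2 else 1)"
proof (cases "j = l")
  case True
  then show ?thesis using coord_moment_diag[of j a] by simp
next
  case False
  have "coord_moment a a = coord_moment j j" by (rule coord_moment_diag)
  also have "\<dots> = 2 * coord_moment j l" by (rule coord_moment_diag_eq_double[OF False])
  finally show ?thesis using False by simp
qed

lemma sphere_integral_quartic_monomial:
  fixes a j k l m :: "'d::finite"
  shows "sphere_integral (quartic_monomial j k l m)
    = complex_of_real (coord_moment a a / 2) * (of_bool (k = j) * of_bool (l = m) + of_bool (l = j) * of_bool (k = m))"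
proof -
  consider "k = j" "l = m" | "k = m" "l = j" "k \<noteq> j" | "\<not> (k = j \<and> l = m)" "\<not> (k = m \<and> l = j)"
    by blast
  then show ?thesis
  proof cases
    case 1
    then show ?thesis
      unfolding sphere_integral_quartic_monomial_cases coord_moment_eq[of j l a] by (cases "j = l") simp_all
  next
    case 2
    then show ?thesis
      unfolding sphere_integral_quartic_monomial_cases coord_moment_eq[of j k a] by simp
  next
    case 3
    then show ?thesis
      unfolding sphere_integral_quartic_monomial_cases by (simp only: if_False of_real_0) auto
  qed
qed

lemma sum_of_bool_eq_mult_delta:
  fixes f :: "'a::finite \<Rightarrow> 'b::comm_semiring_1"
  shows "(\<Sum>i\<in>UNIV. of_bool (i = j) * f i) = f j"
  by simp

lemma quartic_pairing_sum:
  fixes x :: "'d::finite \<Rightarrow> 'd \<Rightarrow> complex"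
  shows "(\<Sum>j\<in>UNIV. \<Sum>k\<in>UNIV. \<Sum>l\<in>UNIV. \<Sum>m\<in>UNIV.
      x j k * cnj (x l m) * (of_bool (k = j) * of_bool (l = m) + of_bool (l = j) * of_bool (k = m)))
    = (\<Sum>j\<in>UNIV. x j j) * (\<Sum>l\<in>UNIV. cnj (x l l)) + (\<Sum>j\<in>UNIV. \<Sum>k\<in>UNIV. x j k * cnj (x j k))"
proof -
  have "x j k * cnj (x l m) * (of_bool (k = j) * of_bool (l = m) + of_bool (l = j) * of_bool (k = m))
      = of_bool (m = l) * (of_bool (k = j) * x j k * cnj (x l m))
        + of_bool (m = k) * (of_bool (l = j) * x j k * cnj (x l m))" for j k l m
    by (simp add: algebra_simps)
  then have "(\<Sum>j\<in>UNIV. \<Sum>k\<in>UNIV. \<Sum>l\<in>UNIV. \<Sum>m\<in>UNIV.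
      x j k * cnj (x l m) * (of_bool (k = j) * of_bool (l = m) + of_bool (l = j) * of_bool (k = m)))
    = (\<Sum>j\<in>UNIV. \<Sum>k\<in>UNIV. \<Sum>l\<in>UNIV. of_bool (k = j) * x j k * cnj (x l l) + of_bool (l = j) * x j k * cnj (x l k))"
    by (simp only: sum.distrib sum_of_bool_eq_mult_delta)
  also have "\<dots> = (\<Sum>j\<in>UNIV. \<Sum>k\<in>UNIV. of_bool (k = j) * (x j k * (\<Sum>l\<in>UNIV. cnj (x l l))) + x j k * cnj (x j k))"
    by (simp only: sum.distrib sum_of_bool_eq_mult_delta sum_distrib_left mult.assoc)
  also have "\<dots> = (\<Sum>j\<in>UNIV. x j j * (\<Sum>l\<in>UNIV. cnj (x l l)) + (\<Sum>k\<in>UNIV. x j k * cnj (x j k)))"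
    by (simp only: sum.distrib sum_of_bool_eq_mult_delta)
  finally show ?thesis by (simp only: sum.distrib sum_distrib_right)
qed

lemma continuous_on_cmod_cinner_sq:
  "continuous_on UNIV (\<lambda>\<psi>. (cmod (cinner_vec \<psi> (A *v \<psi>)))\<^sup>2)"
  unfolding cinner_vec_matrix_vector_mult by (intro continuous_intros continuous_on_vec_nth)

lemma cmod_cinner_sq_eq_quartic_form:
  "complex_of_real ((cmod (cinner_vec \<psi> (A *v \<psi>)))\<^sup>2)
    = (\<Sum>j\<in>UNIV. \<Sum>k\<in>UNIV. \<Sum>l\<in>UNIV. \<Sum>m\<in>UNIV. (A $ j $ k * cnj (A $ l $ m)) * quartic_monomial j k l m \<psi>)"
proof -
  let ?z = "cinner_vec \<psi> (A *v \<psi>)"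
  have "complex_of_real ((cmod ?z)\<^sup>2) = ?z * cnj ?z" by (rule complex_norm_square)
  also have "\<dots> = (\<Sum>j\<in>UNIV. \<Sum>k\<in>UNIV. cnj (\<psi> $ j) * A $ j $ k * \<psi> $ k) *
      (\<Sum>l\<in>UNIV. \<Sum>m\<in>UNIV. \<psi> $ l * cnj (A $ l $ m) * cnj (\<psi> $ m))"
    unfolding cinner_vec_matrix_vector_mult by (simp add: cnj_sum mult_ac)
  also have "\<dots> = (\<Sum>j\<in>UNIV. \<Sum>k\<in>UNIV. \<Sum>l\<in>UNIV. \<Sum>m\<in>UNIV. (A $ j $ k * cnj (A $ l $ m)) * quartic_monomial j k l m \<psi>)"
    unfolding sum_distrib_right unfolding sum_distrib_left
    by (intro sum.cong refl) (simp add: quartic_monomial_def mult_ac)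
  finally show ?thesis .
qed

lemma sphere_integral_cmod_cinner_sq:
  fixes A :: "complex^'d::finite^'d" and a :: 'd
  shows "sphere_integral (\<lambda>\<psi>. (cmod (cinner_vec \<psi> (A *v \<psi>)))\<^sup>2)
    = coord_moment a a / 2 * ((cmod (trace A))\<^sup>2 + (\<Sum>j\<in>UNIV. \<Sum>k\<in>UNIV. (cmod (A $ j $ k))\<^sup>2))"
proof -
  let ?c = "complex_of_real (coord_moment a a / 2)"
  let ?E = "\<lambda>j k l m::'d. of_bool (k = j) * of_bool (l = m) + of_bool (l = j) * of_bool (k = m) :: complex"
  have "complex_of_real (sphere_integral (\<lambda>\<psi>. (cmod (cinner_vec \<psi> (A *v \<psi>)))\<^sup>2))
      = (\<Sum>j\<in>UNIV. \<Sum>k\<in>UNIV. \<Sum>l\<in>UNIV. \<Sum>m\<in>UNIV. (A $ j $ k * cnj (A $ l $ m)) * sphere_integral (quartic_monomial j k l m))"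
    unfolding sphere_integral_of_real[symmetric] cmod_cinner_sq_eq_quartic_form
    by (rule sphere_integral_quartic_form) simp_all
  also have "\<dots> = ?c * (\<Sum>j\<in>UNIV. \<Sum>k\<in>UNIV. \<Sum>l\<in>UNIV. \<Sum>m\<in>UNIV. A $ j $ k * cnj (A $ l $ m) * ?E j k l m)"
    unfolding sphere_integral_quartic_monomial[of _ _ _ _ a] sum_distrib_left
    by (intro sum.cong refl) (simp only: mult_ac)
  also have "\<dots> = ?c * (trace A * cnj (trace A) + (\<Sum>j\<in>UNIV. \<Sum>k\<in>UNIV. A $ j $ k * cnj (A $ j $ k)))"
    unfolding quartic_pairing_sum trace_def cnj_sum ..
  also have "\<dots> = complex_of_real (coord_moment a a / 2 * ((cmod (trace A))\<^sup>2 + (\<Sum>j\<in>UNIV. \<Sum>k\<in>UNIV. (cmod (A $ j $ k))\<^sup>2)))"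
    unfolding of_real_mult of_real_add of_real_sum complex_norm_square ..
  finally show ?thesis by (simp only: of_real_eq_iff)
qed

section \<open>Spectral theorem\<close>

lemma linear_coeff_eq_0_if_quadratic_nonpos:
  fixes a b :: real
  assumes nonpos: "\<And>t. a * t + b * t\<^sup>2 \<le> 0"
  shows "a = 0"
proof (rule ccontr)
  assume "a \<noteq> 0"
  define c where "c = \<bar>b\<bar> + 1"
  have c: "0 < c" by (simp add: c_def)
  define t where "t = a / (2 * c)"
  have "- \<bar>b\<bar> * t\<^sup>2 \<le> b * t\<^sup>2" by (intro mult_right_mono) auto
  then have "a * t - (c - 1) * t\<^sup>2 \<le> a * t + b * t\<^sup>2" by (simp add: c_def)
  moreover have "a * t - (c - 1) * t\<^sup>2 = a\<^sup>2 * (c + 1) / (4 * c\<^sup>2)"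
    unfolding t_def using c by (simp add: field_simps power2_eq_square)
  moreover have "a\<^sup>2 * (c + 1) / (4 * c\<^sup>2) > 0"
    using \<open>a \<noteq> 0\<close> c by (intro divide_pos_pos mult_pos_pos) auto
  ultimately show False using nonpos[of t] by linarith
qed

definition orthonormal_eigvecs :: "complex^'d^'d \<Rightarrow> (complex^'d) set \<Rightarrow> bool" where
  "orthonormal_eigvecs F E \<longleftrightarrow> finite E \<and> (\<forall>u\<in>E. \<forall>v\<in>E. cinner_vec u v = (if u = v then 1 else 0))
     \<and> (\<forall>u\<in>E. F *v u = cinner_vec u (F *v u) *s u)"

lemma orthonormal_eigvecsD:
  assumes "orthonormal_eigvecs F E"
  shows orthonormal_eigvecs_finite: "finite E"
    and orthonormal_eigvecs_cinner: "u \<in> E \<Longrightarrow> v \<in> E \<Longrightarrow> cinner_vec u v = (if u = v then 1 else 0)"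
    and orthonormal_eigvecs_eigen: "u \<in> E \<Longrightarrow> F *v u = cinner_vec u (F *v u) *s u"
  using assms unfolding orthonormal_eigvecs_def by blast+

definition eigenbasis :: "complex^'d^'d \<Rightarrow> (complex^'d) set \<Rightarrow> bool" where
  "eigenbasis F E \<longleftrightarrow> orthonormal_eigvecs F E \<and> (\<forall>x. x = (\<Sum>u\<in>E. cinner_vec u x *s u))"

definition cinner_orth :: "(complex^'d) set \<Rightarrow> (complex^'d) set" where
  "cinner_orth E = {x. \<forall>u\<in>E. cinner_vec u x = 0}"

lemma closed_cinner_orth: "closed (cinner_orth E)"
proof -
  have "continuous_on UNIV (\<lambda>x. cinner_vec u (x::complex^'d))" for u
    unfolding cinner_vec_def by (intro continuous_intros continuous_on_vec_nth)
  then have "closed {x. cinner_vec u x = 0}" for u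
    by (rule closed_Collect_eq[OF _ continuous_on_const])
  moreover have "cinner_orth E = (\<Inter>u\<in>E. {x. cinner_vec u x = 0})"
    by (auto simp: cinner_orth_def)
  ultimately show ?thesis by auto
qed

lemma cinner_orth_add: "x \<in> cinner_orth E \<Longrightarrow> y \<in> cinner_orth E \<Longrightarrow> x + y \<in> cinner_orth E"
  by (simp add: cinner_orth_def cinner_add_right)

lemma cinner_orth_smult: "x \<in> cinner_orth E \<Longrightarrow> c *s x \<in> cinner_orth E"
  by (simp add: cinner_orth_def cinner_smult_right)

lemma scaleR_eq_smult: "r *\<^sub>R x = complex_of_real r *s (x::complex^'d)"
proof -
  have "r *\<^sub>R z = complex_of_real r * z" for z :: complex
    by (simp add: scaleR_conv_of_real)
  then show ?thesis unfolding vec_eq_iff by simp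
qed

lemma cinner_orth_scaleR: "x \<in> cinner_orth E \<Longrightarrow> r *\<^sub>R x \<in> cinner_orth E"
  by (simp add: scaleR_eq_smult cinner_orth_smult)

lemma rayleigh_max_exists:
  fixes F :: "complex^'d^'d"
  assumes x: "x \<in> cinner_orth E" "x \<noteq> 0"
  obtains v where "v \<in> cinner_orth E" "cinner_vec v v = 1"
    "\<And>y. y \<in> cinner_orth E \<Longrightarrow> Re (cinner_vec y (F *v y)) \<le> Re (cinner_vec v (F *v v)) * Re (cinner_vec y y)"
proof -
  define q where "q y = Re (cinner_vec y (F *v y))" for y
  define K where "K = cinner_orth E \<inter> sphere 0 1"
  have "compact K" unfolding K_def by (intro closed_Int_compact closed_cinner_orth compact_sphere)
  moreover have "x /\<^sub>R norm x \<in> K"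
    using x by (auto simp: K_def cinner_orth_scaleR)
  moreover have "continuous_on K q"
    unfolding q_def cinner_vec_matrix_vector_mult by (intro continuous_intros continuous_on_vec_nth)
  ultimately obtain v where v: "v \<in> K" and max: "\<And>y. y \<in> K \<Longrightarrow> q y \<le> q v"
    using continuous_attains_sup[of K q] by blast
  have "q y \<le> q v * Re (cinner_vec y y)" if y: "y \<in> cinner_orth E" for y
  proof (cases "y = 0")
    case True then show ?thesis by (simp add: q_def)
  next
    case False
    have "q ((1 / norm y) *\<^sub>R y) \<le> q v"
      using y False by (intro max) (auto simp: K_def cinner_orth_scaleR)
    moreover have "q ((1 / norm y) *\<^sub>R y) = q y / (norm y)\<^sup>2"
      by (simp add: q_def scaleR_eq_smult vector_scalar_commute cinner_smult_left
          cinner_smult_right power2_eq_square)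
    ultimately show ?thesis
      using False by (simp add: divide_le_eq cinner_self_eq_norm_sq)
  qed
  moreover have "v \<in> cinner_orth E" "cinner_vec v v = 1"
    using v by (auto simp: K_def cinner_self_eq_norm_sq)
  ultimately show ?thesis using that unfolding q_def by blast
qed

lemma rayleigh_max_orthogonal:
  fixes F :: "complex^'d^'d"
  assumes herm: "adj F = F" and v: "v \<in> cinner_orth E" "cinner_vec v v = 1"
    and max: "\<And>y. y \<in> cinner_orth E \<Longrightarrow>
      Re (cinner_vec y (F *v y)) \<le> Re (cinner_vec v (F *v v)) * Re (cinner_vec y y)"
    and w: "w \<in> cinner_orth E"
  shows "Re (cinner_vec w (F *v v - of_real (Re (cinner_vec v (F *v v))) *s v)) = 0"
proof -
  define \<mu> where "\<mu> = Re (cinner_vec v (F *v v))"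
  define z where "z = cinner_vec w (F *v v)"
  have vFw: "cinner_vec v (F *v w) = cnj z"
    unfolding z_def cinner_adj[of v F w] herm by (rule cinner_commute)
  have "2 * (Re z - \<mu> * Re (cinner_vec w v)) * t + (Re (cinner_vec w (F *v w)) - \<mu> * Re (cinner_vec w w)) * t\<^sup>2 \<le> 0"
    for t :: real
  proof -
    have "v + of_real t *s w \<in> cinner_orth E" by (intro cinner_orth_add v cinner_orth_smult w)
    from max[OF this] show ?thesis
      using cinner_quadratic_expand[of v "of_real t" w F] cinner_quadratic_expand[of v "of_real t" w "mat 1"] v(2)
      by (simp add: vFw z_def \<mu>_def cinner_commute[of v w] power2_eq_square algebra_simps)
  qed
  then have "Re z - \<mu> * Re (cinner_vec w v) = 0"
    using linear_coeff_eq_0_if_quadratic_nonpos by (metis mult_eq_0_iff zero_neq_numeral)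
  then show ?thesis by (simp add: cinner_diff_right cinner_smult_right z_def \<mu>_def)
qed

lemma eigenvector_if_rayleigh_max:
  fixes F :: "complex^'d^'d"
  assumes herm: "adj F = F" and E: "orthonormal_eigvecs F E"
    and v: "v \<in> cinner_orth E" "cinner_vec v v = 1"
    and max: "\<And>y. y \<in> cinner_orth E \<Longrightarrow>
      Re (cinner_vec y (F *v y)) \<le> Re (cinner_vec v (F *v v)) * Re (cinner_vec y y)"
  shows "F *v v = cinner_vec v (F *v v) *s v"
proof -
  define \<mu> where "\<mu> = Re (cinner_vec v (F *v v))"
  define g where "g = F *v v - of_real \<mu> *s v"
  have "g \<in> cinner_orth E"
    unfolding cinner_orth_def mem_Collect_eq
  proof
    fix u assume u: "u \<in> E"
    have Fu: "F *v u = cinner_vec u (F *v u) *s u"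
      using E u by (rule orthonormal_eigvecs_eigen)
    have uv: "cinner_vec u v = 0"
      using u v(1) by (simp add: cinner_orth_def)
    have "cinner_vec u (F *v v) = cinner_vec (F *v u) v"
      using cinner_adj[of u F v] herm by simp
    also have "\<dots> = 0"
      by (subst Fu) (simp add: cinner_smult_left uv)
    finally show "cinner_vec u g = 0"
      by (simp add: g_def cinner_diff_right cinner_smult_right uv)
  qed
  then have "g = 0"
    using rayleigh_max_orthogonal[OF herm v max, of g, folded \<mu>_def] cinner_self_eq_0_iff[of g]
    by (simp add: g_def cinner_self complex_eq_iff)
  then have "F *v v = of_real \<mu> *s v" by (simp add: g_def)
  then show ?thesis by (simp add: cinner_smult_right v(2))
qed

lemma orthonormal_eigvecs_insert:
  assumes E: "orthonormal_eigvecs F E" and v: "v \<in> cinner_orth E" "cinner_vec v v = 1"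
    and Fv: "F *v v = cinner_vec v (F *v v) *s v"
  shows "orthonormal_eigvecs F (insert v E)"
  unfolding orthonormal_eigvecs_def
proof (intro conjI ballI)
  show "finite (insert v E)" using orthonormal_eigvecs_finite[OF E] by simp
  have "cinner_vec a v = 0" "cinner_vec v a = 0" if "a \<in> E" for a
    using v(1) that cinner_commute[of v a] by (simp_all add: cinner_orth_def)
  then show "cinner_vec u w = (if u = w then 1 else 0)" if "u \<in> insert v E" "w \<in> insert v E" for u w
    using that orthonormal_eigvecs_cinner[OF E] v(2) by auto
  show "F *v u = cinner_vec u (F *v u) *s u" if "u \<in> insert v E" for u
    using that orthonormal_eigvecs_eigen[OF E] Fv by blast
qed

lemma card_orthonormal_eigvecs_le:
  fixes E :: "(complex^'d::finite) set"
  assumes "orthonormal_eigvecs F E"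
  shows "card E \<le> DIM(complex^'d)"
proof -
  note on = orthonormal_eigvecs_cinner[OF assms]
  have "pairwise orthogonal E"
    unfolding pairwise_def orthogonal_def inner_eq_Re_cinner using on by simp
  moreover have "0 \<notin> E" using on[of 0 0] by auto
  ultimately show ?thesis
    using independent_bound pairwise_orthogonal_independent by blast
qed

lemma residual_in_cinner_orth:
  assumes E: "orthonormal_eigvecs F E"
  shows "x - (\<Sum>u\<in>E. cinner_vec u x *s u) \<in> cinner_orth E"
  unfolding cinner_orth_def mem_Collect_eq
proof
  fix v assume v: "v \<in> E"
  have "cinner_vec v (\<Sum>u\<in>E. cinner_vec u x *s u) = (\<Sum>u\<in>E. if v = u then cinner_vec u x else 0)"
    unfolding cinner_sum_right cinner_smult_right
    by (intro sum.cong refl) (simp add: orthonormal_eigvecs_cinner[OF E v])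
  also have "\<dots> = cinner_vec v x" using orthonormal_eigvecs_finite[OF E] v by simp
  finally show "cinner_vec v (x - (\<Sum>u\<in>E. cinner_vec u x *s u)) = 0"
    by (simp add: cinner_diff_right)
qed

text \<open>A maximal orthonormal family of eigenvectors is a basis: otherwise a maximiser of the
  Rayleigh quotient on its orthogonal complement would extend it.\<close>

theorem eigenbasis_exists:
  fixes F :: "complex^'d^'d"
  assumes herm: "adj F = F"
  obtains E where "eigenbasis F E"
proof -
  define P where "P n \<longleftrightarrow> (\<exists>E. orthonormal_eigvecs F E \<and> card E = n)" for n
  have "P 0" unfolding P_def by (rule exI[of _ "{}"]) (simp add: orthonormal_eigvecs_def)
  moreover have "\<forall>n. P n \<longrightarrow> n \<le> DIM(complex^'d)"
    unfolding P_def using card_orthonormal_eigvecs_le by blast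
  ultimately obtain n where "P n" and n_max: "\<And>m. P m \<Longrightarrow> m \<le> n"
    using Nat.ex_has_greatest_nat by blast
  then obtain E where E: "orthonormal_eigvecs F E" and card: "card E = n"
    using P_def by blast
  have orth_trivial: "x = 0" if x: "x \<in> cinner_orth E" for x
  proof (rule ccontr)
    assume "x \<noteq> 0"
    with x obtain v where v: "v \<in> cinner_orth E" "cinner_vec v v = 1"
      and max: "\<And>y. y \<in> cinner_orth E \<Longrightarrow>
        Re (cinner_vec y (F *v y)) \<le> Re (cinner_vec v (F *v v)) * Re (cinner_vec y y)"
      using rayleigh_max_exists[of x E F] by blast
    have "orthonormal_eigvecs F (insert v E)"
      using orthonormal_eigvecs_insert[OF E v eigenvector_if_rayleigh_max[OF herm E v max]] .
    moreover have "v \<notin> E" using v by (auto simp: cinner_orth_def)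
    ultimately have "P (Suc n)"
      unfolding P_def using orthonormal_eigvecs_finite[OF E] card by (intro exI[of _ "insert v E"]) simp
    then show False using n_max by fastforce
  qed
  have "x = (\<Sum>u\<in>E. cinner_vec u x *s u)" for x
    using orth_trivial[OF residual_in_cinner_orth[OF E, of x]] by simp
  with E show ?thesis using that unfolding eigenbasis_def by blast
qed

section \<open>Positive square root\<close>

text \<open>On an eigenvector of a psd matrix this is the square root of its eigenvalue (the
  \<open>max 0\<close> is then vacuous), so that \<open>eigen_sqrt E F = \<Sum>\<^sub>u \<surd>\<lambda>\<^sub>u |u\<rangle>\<langle>u|\<close>.\<close>

definition sqrt_rayleigh :: "complex^'d^'d \<Rightarrow> complex^'d \<Rightarrow> real" where
  "sqrt_rayleigh F u = sqrt (max 0 (Re (cinner_vec u (F *v u))))"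

definition eigen_sqrt :: "(complex^'d) set \<Rightarrow> complex^'d^'d \<Rightarrow> complex^'d^'d" where
  "eigen_sqrt E F = (\<chi> j k. \<Sum>u\<in>E. of_real (sqrt_rayleigh F u) * u $ j * cnj (u $ k))"

lemma sqrt_rayleigh_nonneg: "0 \<le> sqrt_rayleigh F u"
  by (simp add: sqrt_rayleigh_def)

lemma cinner_psd_eq_sqrt_rayleigh_sq:
  assumes "psd F"
  shows "cinner_vec u (F *v u) = of_real ((sqrt_rayleigh F u)\<^sup>2)"
proof -
  have "Im (cinner_vec u (F *v u)) = 0" "0 \<le> Re (cinner_vec u (F *v u))"
    using assms by (auto simp: psd_def)
  then show ?thesis by (simp add: sqrt_rayleigh_def complex_eq_iff)
qed

lemma eigen_sqrt_apply: "eigen_sqrt E F *v x = (\<Sum>u\<in>E. (of_real (sqrt_rayleigh F u) * cinner_vec u x) *s u)"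
proof -
  have "(eigen_sqrt E F *v x) $ j = (\<Sum>u\<in>E. \<Sum>k\<in>UNIV. of_real (sqrt_rayleigh F u) * u $ j * cnj (u $ k) * x $ k)"
    for j
    unfolding eigen_sqrt_def matrix_vector_mult_def by (simp add: sum_distrib_right sum.swap[of _ E])
  then show ?thesis
    by (simp add: vec_eq_iff cinner_vec_def sum_distrib_left mult_ac)
qed

lemma cinner_eigen_sqrt:
  assumes E: "orthonormal_eigvecs F E" and u: "u \<in> E"
  shows "cinner_vec u (eigen_sqrt E F *v x) = of_real (sqrt_rayleigh F u) * cinner_vec u x"
proof -
  have "cinner_vec u (eigen_sqrt E F *v x)
      = (\<Sum>v\<in>E. if u = v then of_real (sqrt_rayleigh F v) * cinner_vec v x else 0)"
    unfolding eigen_sqrt_apply cinner_sum_right cinner_smult_right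
    by (intro sum.cong refl) (simp add: orthonormal_eigvecs_cinner[OF E u])
  then show ?thesis using orthonormal_eigvecs_finite[OF E] u by simp
qed

lemma psd_eigen_sqrt: "psd (eigen_sqrt E F)"
proof -
  have "cinner_vec x (eigen_sqrt E F *v x) = of_real (\<Sum>u\<in>E. sqrt_rayleigh F u * (cmod (cinner_vec u x))\<^sup>2)" for x
  proof -
    have "cinner_vec x (eigen_sqrt E F *v x)
        = (\<Sum>u\<in>E. of_real (sqrt_rayleigh F u) * (cinner_vec u x * cnj (cinner_vec u x)))"
      unfolding eigen_sqrt_apply cinner_sum_right cinner_smult_right
      by (intro sum.cong refl) (simp add: cinner_commute[of x] mult_ac)
    then show ?thesis
      unfolding of_real_sum of_real_mult complex_norm_square .
  qed
  then show ?thesis unfolding psd_def by (simp add: sum_nonneg sqrt_rayleigh_nonneg)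
qed

lemma adj_eigen_sqrt: "adj (eigen_sqrt E F) = eigen_sqrt E F"
  by (simp add: adj_def eigen_sqrt_def vec_eq_iff cnj_sum mult_ac)

lemma matrix_vector_mult_eigenbasis:
  assumes "eigenbasis F E"
  shows "A *v x = (\<Sum>u\<in>E. cinner_vec u x *s (A *v u))"
proof -
  have "A *v x = A *v (\<Sum>u\<in>E. cinner_vec u x *s u)"
    using assms unfolding eigenbasis_def by metis
  then show ?thesis by (simp add: matrix_vector_mult_sum_right vector_scalar_commute)
qed

lemma eigen_sqrt_square:
  assumes F: "psd F" and E: "eigenbasis F E"
  shows "eigen_sqrt E F ** eigen_sqrt E F = F"
proof -
  have E': "orthonormal_eigvecs F E" using E by (simp add: eigenbasis_def)
  have "(eigen_sqrt E F ** eigen_sqrt E F) *v x = F *v x" for x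
  proof -
    have "(eigen_sqrt E F ** eigen_sqrt E F) *v x = eigen_sqrt E F *v (eigen_sqrt E F *v x)"
      by (simp add: matrix_vector_mul_assoc)
    also have "\<dots> = (\<Sum>u\<in>E. (of_real (sqrt_rayleigh F u) * (of_real (sqrt_rayleigh F u) * cinner_vec u x)) *s u)"
      unfolding eigen_sqrt_apply[of E F "eigen_sqrt E F *v x"]
      by (intro sum.cong refl) (simp add: cinner_eigen_sqrt[OF E'])
    also have "\<dots> = (\<Sum>u\<in>E. cinner_vec u x *s (F *v u))"
    proof (intro sum.cong refl)
      fix u assume u: "u \<in> E"
      show "(of_real (sqrt_rayleigh F u) * (of_real (sqrt_rayleigh F u) * cinner_vec u x)) *s u
          = cinner_vec u x *s (F *v u)"
        by (subst orthonormal_eigvecs_eigen[OF E' u])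
          (simp add: cinner_psd_eq_sqrt_rayleigh_sq[OF F] vector_smult_assoc power2_eq_square mult_ac)
    qed
    also have "\<dots> = F *v x" by (rule matrix_vector_mult_eigenbasis[OF E, symmetric])
    finally show ?thesis .
  qed
  then show ?thesis by (simp add: matrix_eq)
qed

lemma psd_sqrt_apply_eigenvector:
  assumes T: "psd T" and TT: "T ** T = F" and Fu: "F *v u = of_real (t\<^sup>2) *s u" and t: "0 \<le> t"
  shows "T *v u = of_real t *s u"
proof -
  have TTv: "T *v (T *v y) = F *v y" for y using TT by (simp add: matrix_vector_mul_assoc)
  define w where "w = T *v u - of_real t *s u"
  have "T *v w + of_real t *s w = F *v u - of_real (t\<^sup>2) *s u"
    by (simp add: w_def matrix_vector_mult_diff_distrib vector_scalar_commute TTv vector_smult_assoc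
        algebra_simps power2_eq_square vector_sadd_rdistrib[symmetric] vector_ssub_ldistrib)
  then have "cinner_vec w (T *v w) + of_real t * cinner_vec w w = 0"
    using cinner_add_right[of w "T *v w" "of_real t *s w"] Fu by (simp add: cinner_smult_right)
  then have "Re (cinner_vec w (T *v w)) + t * (norm w)\<^sup>2 = 0"
    by (simp add: cinner_self_eq_norm_sq complex_eq_iff)
  moreover have "0 \<le> Re (cinner_vec w (T *v w))" using T by (simp add: psd_def)
  ultimately have "t * (norm w)\<^sup>2 = 0" by (smt (verit) mult_nonneg_nonneg t zero_le_power2)
  then have "t = 0 \<or> w = 0" by simp
  then show ?thesis
  proof
    assume "t = 0"
    have "cinner_vec (T *v u) (T *v u) = cinner_vec u (T *v (T *v u))"
      using cinner_adj[of u T "T *v u"] psd_adj_eq[OF T] by simp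
    also have "\<dots> = 0" using TTv[of u] Fu \<open>t = 0\<close> by simp
    finally show ?thesis using \<open>t = 0\<close> by (simp add: cinner_self_eq_0_iff)
  qed (simp add: w_def)
qed

lemma psd_sqrt_eq_eigen_sqrt:
  assumes F: "psd F" and E: "eigenbasis F E"
  shows "psd_sqrt F = eigen_sqrt E F"
  unfolding psd_sqrt_def
proof (rule the_equality)
  show "psd (eigen_sqrt E F) \<and> eigen_sqrt E F ** eigen_sqrt E F = F"
    using psd_eigen_sqrt eigen_sqrt_square[OF F E] by simp
  have E': "orthonormal_eigvecs F E" using E by (simp add: eigenbasis_def)
  fix T assume T: "psd T \<and> T ** T = F"
  have "T *v u = of_real (sqrt_rayleigh F u) *s u" if u: "u \<in> E" for u
  proof (rule psd_sqrt_apply_eigenvector)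
    show "F *v u = of_real ((sqrt_rayleigh F u)\<^sup>2) *s u"
      by (subst orthonormal_eigvecs_eigen[OF E' u]) (simp add: cinner_psd_eq_sqrt_rayleigh_sq[OF F])
  qed (use T in \<open>simp_all add: sqrt_rayleigh_nonneg\<close>)
  then have "T *v x = eigen_sqrt E F *v x" for x
    unfolding matrix_vector_mult_eigenbasis[OF E, of T x] eigen_sqrt_apply
    by (intro sum.cong refl) (simp add: vector_smult_assoc mult.commute)
  then show "T = eigen_sqrt E F" by (simp add: matrix_eq)
qed

lemma trace_eq_sum_eigenbasis:
  assumes E: "eigenbasis F E"
  shows "trace M = (\<Sum>u\<in>E. cinner_vec u (M *v u))"
proof -
  have "M $ j $ j = (\<Sum>u\<in>E. cnj (u $ j) * (M *v u) $ j)" for j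
  proof -
    have "M $ j $ j = cinner_vec (axis j 1) (\<Sum>u\<in>E. cinner_vec u (axis j 1) *s (M *v u))"
      by (simp only: cinner_axis_matrix matrix_vector_mult_eigenbasis[OF E, of M "axis j 1", symmetric])
    also have "\<dots> = (\<Sum>u\<in>E. cnj (u $ j) * (M *v u) $ j)"
      unfolding cinner_sum_right cinner_smult_right cinner_axis_left
      by (intro sum.cong refl) (simp add: cinner_commute[of u "axis j 1" for u] cinner_axis_left)
    finally show ?thesis .
  qed
  then have "trace M = (\<Sum>j\<in>UNIV. \<Sum>u\<in>E. cnj (u $ j) * (M *v u) $ j)" by (simp add: trace_def)
  also have "\<dots> = (\<Sum>u\<in>E. cinner_vec u (M *v u))"
    unfolding cinner_vec_def by (rule sum.swap)
  finally show ?thesis .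
qed

lemma trace_psd_sqrt:
  assumes F: "psd F" and E: "eigenbasis F E"
  shows "trace (psd_sqrt F) = of_real (\<Sum>u\<in>E. sqrt_rayleigh F u)"
proof -
  have E': "orthonormal_eigvecs F E" using E by (simp add: eigenbasis_def)
  show ?thesis
    unfolding psd_sqrt_eq_eigen_sqrt[OF F E] trace_eq_sum_eigenbasis[OF E] of_real_sum
    by (intro sum.cong refl) (simp add: cinner_eigen_sqrt[OF E'] orthonormal_eigvecs_cinner[OF E'])
qed

lemma adj_psd_sqrt_mult_self:
  assumes F: "psd F"
  shows "adj (psd_sqrt F) ** psd_sqrt F = F"
proof -
  obtain E where E: "eigenbasis F E"
    using eigenbasis_exists[OF psd_adj_eq[OF F]] by blast
  show ?thesis
    unfolding psd_sqrt_eq_eigen_sqrt[OF F E] adj_eigen_sqrt by (rule eigen_sqrt_square[OF F E])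
qed

section \<open>The trace inequality\<close>

lemma cmod_cinner_unit_sq_le:
  assumes u: "cinner_vec u u = 1"
  shows "(cmod (cinner_vec u y))\<^sup>2 \<le> (norm y)\<^sup>2"
proof -
  define c where "c = cinner_vec u y"
  have "cinner_vec (y + (- c) *s u) (y + (- c) *s u) = cinner_vec y y - c * cnj c"
    using cinner_quadratic_expand[of y "- c" u "mat 1"] u
    by (simp add: c_def cinner_commute[of y u] algebra_simps)
  then have "0 \<le> Re (cinner_vec y y - c * cnj c)"
    by (metis Re_cinner_self zero_le_power2)
  also have "Re (cinner_vec y y - c * cnj c) = (norm y)\<^sup>2 - (cmod c)\<^sup>2"
    by (simp add: Re_cinner_self complex_norm_square[symmetric])
  finally show ?thesis by (simp add: c_def)
qed

lemma L2_set_sum_le: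
  fixes a :: "'i \<Rightarrow> 'u \<Rightarrow> 'a::real_normed_vector"
  assumes "finite E"
  shows "L2_set (\<lambda>i. norm (\<Sum>u\<in>E. a i u)) I \<le> (\<Sum>u\<in>E. L2_set (\<lambda>i. norm (a i u)) I)"
  using assms
proof (induction E rule: finite_induct)
  case empty
  then show ?case by (simp add: L2_set_def)
next
  case (insert x E)
  have "L2_set (\<lambda>i. norm (\<Sum>u\<in>insert x E. a i u)) I
      \<le> L2_set (\<lambda>i. norm (a i x) + norm (\<Sum>u\<in>E. a i u)) I"
    using insert by (intro L2_set_mono) (simp_all add: norm_triangle_ineq)
  also have "\<dots> \<le> L2_set (\<lambda>i. norm (a i x)) I + L2_set (\<lambda>i. norm (\<Sum>u\<in>E. a i u)) I"
    by (rule L2_set_triangle_ineq)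
  also have "\<dots> \<le> (\<Sum>u\<in>insert x E. L2_set (\<lambda>i. norm (a i u)) I)"
    using insert by simp
  finally show ?case .
qed

text \<open>Expand \<open>tr A\<^sub>i = \<Sum>\<^sub>u \<langle>u|A\<^sub>i u\<rangle>\<close> in an eigenbasis of \<open>F\<close>. By Minkowski's inequality
  the \<open>l\<^sup>2\<close>-norm over \<open>i\<close> is at most \<open>\<Sum>\<^sub>u \<surd>(\<Sum>\<^sub>i \<parallel>A\<^sub>i u\<parallel>\<^sup>2) = \<Sum>\<^sub>u \<surd>\<langle>u|F u\<rangle> = tr \<surd>F\<close>.\<close>

theorem sum_cmod_trace_sq_le:
  assumes F: "psd F" and I: "finite I" and A: "(\<Sum>i\<in>I. adj (A i) ** A i) = F"
  shows "(\<Sum>i\<in>I. (cmod (trace (A i)))\<^sup>2) \<le> (cmod (trace (psd_sqrt F)))\<^sup>2"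
proof -
  obtain E where E: "eigenbasis F E"
    using eigenbasis_exists[OF psd_adj_eq[OF F]] by blast
  have E': "orthonormal_eigvecs F E" using E by (simp add: eigenbasis_def)
  define a where "a i u = cinner_vec u (A i *v u)" for i u
  have column_le: "L2_set (\<lambda>i. cmod (a i u)) I \<le> sqrt_rayleigh F u" if u: "u \<in> E" for u
  proof -
    have "(\<Sum>i\<in>I. (cmod (a i u))\<^sup>2) \<le> (\<Sum>i\<in>I. (norm (A i *v u))\<^sup>2)"
      unfolding a_def using orthonormal_eigvecs_cinner[OF E' u u]
      by (intro sum_mono cmod_cinner_unit_sq_le) simp
    also have "\<dots> = Re (\<Sum>i\<in>I. cinner_vec u ((adj (A i) ** A i) *v u))"
    proof -
      have "cinner_vec (A i *v u) (A i *v u) = cinner_vec u ((adj (A i) ** A i) *v u)" for i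
        using cinner_adj[of u "adj (A i)" "A i *v u"] by (simp add: matrix_vector_mul_assoc)
      then show ?thesis by (simp add: Re_sum Re_cinner_self[symmetric])
    qed
    also have "\<dots> = (sqrt_rayleigh F u)\<^sup>2"
      unfolding cinner_sum_right[symmetric] matrix_vector_mult_sum_left[symmetric] A
      by (simp add: cinner_psd_eq_sqrt_rayleigh_sq[OF F])
    finally show ?thesis
      unfolding L2_set_def by (simp add: real_le_lsqrt sqrt_rayleigh_nonneg)
  qed
  have "L2_set (\<lambda>i. cmod (trace (A i))) I \<le> (\<Sum>u\<in>E. L2_set (\<lambda>i. cmod (a i u)) I)"
    unfolding trace_eq_sum_eigenbasis[OF E] a_def
    by (rule L2_set_sum_le[OF orthonormal_eigvecs_finite[OF E']])
  also have "\<dots> \<le> (\<Sum>u\<in>E. sqrt_rayleigh F u)"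
    by (rule sum_mono[OF column_le])
  also have "\<dots> = cmod (trace (psd_sqrt F))"
    unfolding trace_psd_sqrt[OF F E] norm_of_real by (simp add: sum_nonneg sqrt_rayleigh_nonneg)
  finally show ?thesis
    unfolding L2_set_def by (rule sqrt_le_D)
qed

lemma sum_cmod_sq_eq_Re_trace: "(\<Sum>j\<in>UNIV. \<Sum>k\<in>UNIV. (cmod (A $ j $ k))\<^sup>2) = Re (trace (adj A ** A))"
proof -
  have "(adj A ** A) $ k $ k = of_real (\<Sum>j\<in>UNIV. (cmod (A $ j $ k))\<^sup>2)" for k
    unfolding of_real_sum complex_norm_square by (simp add: matrix_matrix_mult_def adj_def mult.commute)
  then have "Re (trace (adj A ** A)) = (\<Sum>k\<in>UNIV. \<Sum>j\<in>UNIV. (cmod (A $ j $ k))\<^sup>2)"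
    by (simp add: trace_def Re_sum)
  also have "\<dots> = (\<Sum>j\<in>UNIV. \<Sum>k\<in>UNIV. (cmod (A $ j $ k))\<^sup>2)"
    by (rule sum.swap)
  finally show ?thesis ..
qed

lemma trace_sum: "trace (\<Sum>i\<in>I. M i) = (\<Sum>i\<in>I. trace (M i))"
  unfolding trace_def by (simp add: sum_component) (rule sum.swap)

lemma avg_disturbance_compatible:
  fixes F :: "'b \<Rightarrow> complex^'d^'d" and a :: 'd
  assumes B: "finite B" and compat: "compatible_instrument B F I A"
  shows "avg_disturbance B I A = 1 - coord_moment a a / (2 * measure lebesgue (ball (0::complex^'d) 1))
    * (\<Sum>b\<in>B. (\<Sum>i\<in>I b. (cmod (trace (A b i)))\<^sup>2) + Re (trace (F b)))"
proof -
  have I: "finite (I b)" and AF: "(\<Sum>i\<in>I b. adj (A b i) ** A b i) = F b" if "b \<in> B" for b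
    using compat that by (auto simp: compatible_instrument_def)
  define \<kappa> where "\<kappa> = coord_moment a a / 2"
  have "sphere_integral (\<lambda>\<psi>. \<Sum>b\<in>B. \<Sum>i\<in>I b. (cmod (cinner_vec \<psi> (A b i *v \<psi>)))\<^sup>2)
      = (\<Sum>b\<in>B. \<Sum>i\<in>I b. sphere_integral (\<lambda>\<psi>. (cmod (cinner_vec \<psi> (A b i *v \<psi>)))\<^sup>2))"
    using B I by (simp add: sphere_integral_sum continuous_on_sum continuous_on_cmod_cinner_sq)
  also have "\<dots> = \<kappa> * (\<Sum>b\<in>B. (\<Sum>i\<in>I b. (cmod (trace (A b i)))\<^sup>2) + Re (trace (F b)))"
    unfolding sum_distrib_left
  proof (intro sum.cong refl)
    fix b assume b: "b \<in> B"
    have "(\<Sum>i\<in>I b. Re (trace (adj (A b i) ** A b i))) = Re (trace (F b))"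
      unfolding AF[OF b, symmetric] trace_sum Re_sum ..
    then show "(\<Sum>i\<in>I b. sphere_integral (\<lambda>\<psi>. (cmod (cinner_vec \<psi> (A b i *v \<psi>)))\<^sup>2))
        = \<kappa> * ((\<Sum>i\<in>I b. (cmod (trace (A b i)))\<^sup>2) + Re (trace (F b)))"
      unfolding sphere_integral_cmod_cinner_sq[of _ a, folded \<kappa>_def] sum_cmod_sq_eq_Re_trace
      by (simp add: sum.distrib distrib_left flip: sum_distrib_left)
  qed
  finally show ?thesis
    unfolding avg_disturbance_def sphere_avg_eq_sphere_integral
    by (simp only: \<kappa>_def) simp
qed

theorem mainTheorem4:
  fixes B :: "'b set" and F :: "'b \<Rightarrow> complex^'d^'d"
  assumes "is_POVM B F"
  shows "compatible_instrument B F (\<lambda>b. {()}) (\<lambda>b _. psd_sqrt (F b))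
    \<and> (\<forall>(I :: 'b \<Rightarrow> 'i set) A. compatible_instrument B F I A \<longrightarrow>
         avg_disturbance B (\<lambda>b. {()}) (\<lambda>b _. psd_sqrt (F b)) \<le> avg_disturbance B I A)"
proof (intro conjI allI impI)
  have B: "finite B" and F: "\<And>b. b \<in> B \<Longrightarrow> psd (F b)"
    using assms by (auto simp: is_POVM_def)
  show sqrt_compat: "compatible_instrument B F (\<lambda>b. {()}) (\<lambda>b _. psd_sqrt (F b))"
    unfolding compatible_instrument_def by (simp add: F adj_psd_sqrt_mult_self)
  fix I :: "'b \<Rightarrow> 'i set" and A and a :: 'd
  assume compat: "compatible_instrument B F I A"
  have I: "finite (I b)" and AF: "(\<Sum>i\<in>I b. adj (A b i) ** A b i) = F b" if "b \<in> B" for b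
    using compat that by (auto simp: compatible_instrument_def)
  have "0 \<le> coord_moment a a / (2 * measure lebesgue (ball (0::complex^'d) 1))"
    unfolding coord_moment_def by (intro divide_nonneg_nonneg sphere_integral_nonneg) simp_all
  moreover have "(\<Sum>i\<in>I b. (cmod (trace (A b i)))\<^sup>2) \<le> (\<Sum>i\<in>{()}. (cmod (trace (psd_sqrt (F b))))\<^sup>2)"
    if "b \<in> B" for b
    using sum_cmod_trace_sq_le[OF F I AF] that by simp
  ultimately show "avg_disturbance B (\<lambda>b. {()}) (\<lambda>b _. psd_sqrt (F b)) \<le> avg_disturbance B I A"
    unfolding avg_disturbance_compatible[OF B sqrt_compat, of a] avg_disturbance_compatible[OF B compat, of a]
    by (intro diff_left_mono mult_left_mono sum_mono add_right_mono) simp_all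
qed

end
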